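(* Let $A\in\mathbb{R}^{n\times n}$ be monotone, let $A=P_1-R_1+S_1$ be a double weak regular splitting and $A=P_2-R_2+S_2$ a double regular splitting of $A$. Suppose $1\notin\sigma(S_2P_1^{-1})$, $-1\notin\sigma(R_2P_1^{-1})$, $\widehat{A}^{-1}\geq 0$ and $\widehat{\mathcal{A}}^{-1}\geq 0$, where $\widehat{A}=(I-S_2P_1^{-1})A$ and $\widehat{\mathcal{A}}=(I+R_2P_1^{-1})A$. Let $\widehat{P}=\widehat{\mathcal{P}}=P_2$, $\widehat{R}=R_2-S_2P_1^{-1}R_1$ and $\widehat{\mathcal{R}}=R_2P_1^{-1}R_1-S_2$. If $\widehat{\mathcal{P}}^{-1}\widehat{\mathcal{R}}\geq\widehat{P}^{-1}\widehat{R}$ and $\widehat{\mathcal{P}}^{-1}\widehat{\mathcal{A}}\geq\widehat{P}^{-1}\widehat{A}$, then $\rho(\mathcal{W}_{12})\leq\rho(W_{12})<1$, where $$W_{12}=\begin{pmatrix} P_2^{-1}R_2-P_2^{-1}S_2P_1^{-1}R_1 & P_2^{-1}S_2P_1^{-1}S_1\\ I & 0\end{pmatrix},\qquad \mathcal{W}_{12}=\begin{pmatrix} P_2^{-1}R_2P_1^{-1}R_1-P_2^{-1}S_2 & -P_2^{-1}R_2P_1^{-1}S_1\\ I & 0\end{pmatrix}.$$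
   Context: Inequalities are entrywise; $\rho$ is the spectral radius, $\sigma$ the spectrum. $A$ is monotone if $A$ is nonsingular and $A^{-1}\geq 0$. A double splitting $A=P-R+S$ with $P$ nonsingular is a double regular splitting if $P^{-1}\geq0$, $R\geq0$, $S\leq0$, and a double weak regular splitting if $P^{-1}\geq 0$, $P^{-1}R\geq0$, $P^{-1}S\leq0$. *)

theory Defs
  imports "Jordan_Normal_Form.Spectral_Radius" "Jordan_Normal_Form.Gauss_Jordan_Elimination"
begin

definition minv :: "real mat \<Rightarrow> real mat" where
  "minv A = the (mat_inverse A)"

definition rspec :: "real mat \<Rightarrow> complex set" where
  "rspec A = spectrum (map_mat complex_of_real A)"

definition rrho :: "real mat \<Rightarrow> real" where
  "rrho A = spectral_radius (map_mat complex_of_real A)"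

definition monotone_mat :: "real mat \<Rightarrow> bool" where
  "monotone_mat A \<longleftrightarrow> invertible_mat A \<and> 0\<^sub>m (dim_row A) (dim_col A) \<le> minv A"

definition double_regular_splitting :: "real mat \<Rightarrow> real mat \<Rightarrow> real mat \<Rightarrow> real mat \<Rightarrow> bool" where
  "double_regular_splitting A P R S \<longleftrightarrow>
     A = P - R + S \<and> invertible_mat P \<and>
     0\<^sub>m (dim_row P) (dim_col P) \<le> minv P \<and>
     0\<^sub>m (dim_row R) (dim_col R) \<le> R \<and>
     S \<le> 0\<^sub>m (dim_row S) (dim_col S)"

definition double_weak_regular_splitting :: "real mat \<Rightarrow> real mat \<Rightarrow> real mat \<Rightarrow> real mat \<Rightarrow> bool" where
  "double_weak_regular_splitting A P R S \<longleftrightarrow>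
     A = P - R + S \<and> invertible_mat P \<and>
     0\<^sub>m (dim_row P) (dim_col P) \<le> minv P \<and>
     0\<^sub>m (dim_row P) (dim_col R) \<le> minv P * R \<and>
     minv P * S \<le> 0\<^sub>m (dim_row P) (dim_col S)"

end

theory Submission
  imports Defs
begin

(*
  Write the two iteration matrices as W = [[T, U], [I, 0]] and W' = [[T', U'], [I, 0]] with
  T = P2^-1 R2 - P2^-1 S2 P1^-1 R1, U = P2^-1 S2 P1^-1 S1, T' = P2^-1 R2 P1^-1 R1 - P2^-1 S2 and
  U' = - P2^-1 R2 P1^-1 S1; the sign conditions of the two splittings make all four blocks nonnegative.
  For nonnegative B, rho(B) < 1 iff I - B has a nonnegative left inverse (the Neumann series), and for
  nonnegative T, U and c >= 0 the matrix I - [[T, U], [cI, 0]] has one iff I - (T + cU) has one.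
  Since P2^-1 Ahat = I - (T + U) with P2^-1 >= 0 and Ahat^-1 >= 0, the Neumann partial sums of T + U
  stay bounded, so rho(T + U) < 1 and hence rho(W) < 1.  The comparison hypotheses say T <= T' and
  T' + U' <= T + U, hence cT' + c^2 U' <= cT + c^2 U for all c >= 1; so rho(cW) < 1 implies
  rho(cW') < 1, and c = 1/t with t slightly above rho(W) yields rho(W') <= rho(W).
*)

declare minus_carrier_mat [simp]

section \<open>Nonnegative matrices\<close>

definition nonneg_mat :: "real mat \<Rightarrow> bool" where
  "nonneg_mat B \<longleftrightarrow> (\<forall>i<dim_row B. \<forall>j<dim_col B. 0 \<le> B $$ (i,j))"

lemma nonneg_matD: "nonneg_mat B \<Longrightarrow> B \<in> carrier_mat n m \<Longrightarrow> i < n \<Longrightarrow> j < m \<Longrightarrow> 0 \<le> B $$ (i,j)"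
  unfolding nonneg_mat_def by auto

lemma less_eq_matI:
  "A \<in> carrier_mat n m \<Longrightarrow> B \<in> carrier_mat n m \<Longrightarrow>
    (\<And>i j. i < n \<Longrightarrow> j < m \<Longrightarrow> A $$ (i,j) \<le> B $$ (i,j)) \<Longrightarrow> A \<le> B"
  unfolding less_eq_mat_def by auto

lemma less_eq_matD: "A \<le> B \<Longrightarrow> B \<in> carrier_mat n m \<Longrightarrow> i < n \<Longrightarrow> j < m \<Longrightarrow> A $$ (i,j) \<le> B $$ (i,j)"
  unfolding less_eq_mat_def by auto

lemma zero_le_mat_iff_nonneg_mat: "B \<in> carrier_mat n m \<Longrightarrow> 0\<^sub>m n m \<le> B \<longleftrightarrow> nonneg_mat B"
  unfolding nonneg_mat_def less_eq_mat_def by auto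

lemma le_zero_mat_iff_nonneg_mat_uminus: "B \<in> carrier_mat n m \<Longrightarrow> B \<le> 0\<^sub>m n m \<longleftrightarrow> nonneg_mat (- B)"
  unfolding nonneg_mat_def less_eq_mat_def by auto

lemma nonneg_mat_le: "nonneg_mat B \<Longrightarrow> B \<le> C \<Longrightarrow> nonneg_mat C"
  unfolding nonneg_mat_def less_eq_mat_def by (metis order.trans)

lemma nonneg_mat_one [simp]: "nonneg_mat (1\<^sub>m n)"
  unfolding nonneg_mat_def by auto

lemma nonneg_mat_zero [simp]: "nonneg_mat (0\<^sub>m n m)"
  unfolding nonneg_mat_def by auto

lemma nonneg_mat_add:
  "A \<in> carrier_mat n m \<Longrightarrow> B \<in> carrier_mat n m \<Longrightarrow> nonneg_mat A \<Longrightarrow> nonneg_mat B \<Longrightarrow> nonneg_mat (A + B)"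
  unfolding nonneg_mat_def by auto

lemma nonneg_mat_diff:
  "A \<in> carrier_mat n m \<Longrightarrow> B \<in> carrier_mat n m \<Longrightarrow> nonneg_mat A \<Longrightarrow> nonneg_mat (- B) \<Longrightarrow> nonneg_mat (A - B)"
  unfolding nonneg_mat_def by fastforce

lemma nonneg_mat_smult: "0 \<le> c \<Longrightarrow> nonneg_mat A \<Longrightarrow> nonneg_mat (c \<cdot>\<^sub>m A)"
  unfolding nonneg_mat_def by auto

lemma nonneg_mat_mult:
  "dim_col A = dim_row B \<Longrightarrow> nonneg_mat A \<Longrightarrow> nonneg_mat B \<Longrightarrow> nonneg_mat (A * B)"
  unfolding nonneg_mat_def by (auto simp: scalar_prod_def intro!: sum_nonneg)

lemma nonneg_mat_uminus_mult_left:
  "dim_col A = dim_row B \<Longrightarrow> nonneg_mat (- A) \<Longrightarrow> nonneg_mat B \<Longrightarrow> nonneg_mat (- (A * B))"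
  using nonneg_mat_mult[of "- A" B] by simp

lemma nonneg_mat_uminus_mult_right:
  "dim_col A = dim_row B \<Longrightarrow> nonneg_mat A \<Longrightarrow> nonneg_mat (- B) \<Longrightarrow> nonneg_mat (- (A * B))"
  using nonneg_mat_mult[of A "- B"] by simp

lemma nonneg_mat_uminus_mult_uminus:
  "dim_col A = dim_row B \<Longrightarrow> nonneg_mat (- A) \<Longrightarrow> nonneg_mat (- B) \<Longrightarrow> nonneg_mat (A * B)"
  using nonneg_mat_mult[of "- A" "- B"] by simp

lemma nonneg_mat_pow: "B \<in> carrier_mat n n \<Longrightarrow> nonneg_mat B \<Longrightarrow> nonneg_mat (B ^\<^sub>m k)"
  by (induct k) (auto intro: nonneg_mat_mult)

lemma nonneg_mat_four_block:
  assumes "A \<in> carrier_mat n1 m1" "B \<in> carrier_mat n1 m2" "C \<in> carrier_mat n2 m1" "D \<in> carrier_mat n2 m2"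
    and "nonneg_mat A" "nonneg_mat B" "nonneg_mat C" "nonneg_mat D"
  shows "nonneg_mat (four_block_mat A B C D)"
  using assms unfolding nonneg_mat_def by auto

lemma nonneg_mat_four_block_upper_left:
  assumes "A \<in> carrier_mat n1 m1" "D \<in> carrier_mat n2 m2" "nonneg_mat (four_block_mat A B C D)"
  shows "nonneg_mat A"
  using assms unfolding nonneg_mat_def by (metis index_mat_four_block carrier_matD trans_less_add1)

lemma mult_mono_nonneg_mat:
  assumes "A \<in> carrier_mat n m" "A' \<in> carrier_mat n m" "B \<in> carrier_mat m k" "B' \<in> carrier_mat m k"
    and "nonneg_mat A" "nonneg_mat B" "A \<le> A'" "B \<le> B'"
  shows "A * B \<le> A' * B'"
  using assms unfolding nonneg_mat_def less_eq_mat_def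
  by (auto simp: scalar_prod_def intro!: sum_mono mult_mono) (meson order.trans)

lemma pow_mono_nonneg_mat:
  assumes "B \<in> carrier_mat n n" "C \<in> carrier_mat n n" "nonneg_mat B" "B \<le> C"
  shows "B ^\<^sub>m k \<le> C ^\<^sub>m k"
proof (induct k)
  case 0
  then show ?case using assms(1,2) by (simp add: less_eq_mat_def)
next
  case (Suc k)
  then show ?case using assms nonneg_mat_pow mult_mono_nonneg_mat[of "B ^\<^sub>m k" n n "C ^\<^sub>m k" B n C] by simp
qed

lemma le_diff_mat_cancel_left:
  assumes "(A :: real mat) \<in> carrier_mat n m" "B \<in> carrier_mat n m" "C \<in> carrier_mat n m" "C - A \<le> C - B"
  shows "B \<le> A"
  using assms unfolding less_eq_mat_def by auto

lemma smult_one_mat [simp]: "(1 :: real) \<cdot>\<^sub>m A = A"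
  by (intro eq_matI) auto

lemma invertible_mat_det_neq_0:
  assumes A: "A \<in> carrier_mat n n" and "invertible_mat A"
  shows "det A \<noteq> 0"
proof -
  from assms obtain B where AB: "A * B = 1\<^sub>m n" and BA: "B * A = 1\<^sub>m (dim_row B)"
    unfolding invertible_mat_def inverts_mat_def by auto
  have "B \<in> carrier_mat n n"
    using arg_cong[OF AB, of dim_col] arg_cong[OF BA, of dim_col] A by auto
  then show ?thesis using det_mult[OF A, of B] AB by auto
qed

lemma minv_inverse:
  assumes A: "A \<in> carrier_mat n n" and "det A \<noteq> 0"
  shows "minv A \<in> carrier_mat n n" "A * minv A = 1\<^sub>m n" "minv A * A = 1\<^sub>m n"
proof -
  have "A \<in> Units (ring_mat TYPE(real) n ())" using det_non_zero_imp_unit[OF assms] .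
  then obtain B where "mat_inverse A = Some B" using mat_inverse(1)[OF A] by fastforce
  then show "minv A \<in> carrier_mat n n" "A * minv A = 1\<^sub>m n" "minv A * A = 1\<^sub>m n"
    using mat_inverse(2)[OF A] unfolding minv_def by auto
qed

lemma det_one_minus_neq_0:
  assumes X: "X \<in> carrier_mat n n" and "1 \<notin> rspec X"
  shows "det (1\<^sub>m n - X) \<noteq> 0"
proof
  assume "det (1\<^sub>m n - X) = 0"
  moreover have "char_matrix X 1 = - (1\<^sub>m n - X)"
    using X unfolding char_matrix_def by (intro eq_matI) auto
  ultimately have "eigenvalue X 1"
    using X det_0_negate[of "1\<^sub>m n - X" n] by (simp add: eigenvalue_det)
  then have "eigenvalue (map_mat complex_of_real X) 1"
    using of_real_hom.eigenvalue_hom[OF X] by fastforce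
  with assms show False unfolding rspec_def spectrum_def by auto
qed

lemma rrho_attained: "B \<in> carrier_mat n n \<Longrightarrow> 0 < n \<Longrightarrow> \<exists>\<mu>\<in>rspec B. norm \<mu> = rrho B"
  using spectral_radius_mem_max(1)[of "map_mat complex_of_real B" n]
  unfolding rrho_def rspec_def by force

lemma norm_le_rrho: "B \<in> carrier_mat n n \<Longrightarrow> 0 < n \<Longrightarrow> \<mu> \<in> rspec B \<Longrightarrow> norm \<mu> \<le> rrho B"
  using spectral_radius_mem_max(2)[of "map_mat complex_of_real B" n]
  unfolding rrho_def rspec_def by force

lemma rrho_nonneg: "B \<in> carrier_mat n n \<Longrightarrow> 0 < n \<Longrightarrow> 0 \<le> rrho B"
  using rrho_attained norm_ge_zero by metis

lemma smult_mem_rspec: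
  assumes B: "B \<in> carrier_mat n n" and "\<mu> \<in> rspec B"
  shows "complex_of_real c * \<mu> \<in> rspec (c \<cdot>\<^sub>m B)"
proof -
  let ?B = "map_mat complex_of_real B"
  from assms obtain v where "eigenvector ?B v \<mu>"
    unfolding rspec_def spectrum_def eigenvalue_def by auto
  then have v: "v \<in> carrier_vec n" "v \<noteq> 0\<^sub>v n" and Bv: "?B *\<^sub>v v = \<mu> \<cdot>\<^sub>v v"
    using B unfolding eigenvector_def by auto
  have "map_mat complex_of_real (c \<cdot>\<^sub>m B) *\<^sub>v v = complex_of_real c \<cdot>\<^sub>v (?B *\<^sub>v v)"
    using B v by (intro eq_vecI) (auto simp: scalar_prod_def sum_distrib_left mult.assoc)
  also have "\<dots> = (complex_of_real c * \<mu>) \<cdot>\<^sub>v v"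
    unfolding Bv using v by (intro eq_vecI) auto
  finally show ?thesis
    using v B unfolding rspec_def spectrum_def eigenvalue_def eigenvector_def by auto
qed

lemma rrho_smult:
  assumes B: "B \<in> carrier_mat n n" and n: "0 < n" and c: "0 < c"
  shows "rrho (c \<cdot>\<^sub>m B) = c * rrho B"
proof (rule antisym)
  have cB: "c \<cdot>\<^sub>m B \<in> carrier_mat n n" using B by simp
  obtain \<mu> where "\<mu> \<in> rspec (c \<cdot>\<^sub>m B)" "norm \<mu> = rrho (c \<cdot>\<^sub>m B)"
    using rrho_attained[OF cB n] by blast
  moreover have "(1 / c) \<cdot>\<^sub>m (c \<cdot>\<^sub>m B) = B" using B c by (intro eq_matI) auto
  ultimately have "complex_of_real (1 / c) * \<mu> \<in> rspec B"
    using smult_mem_rspec[OF cB, of \<mu> "1 / c"] by simp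
  then have "rrho (c \<cdot>\<^sub>m B) / c \<le> rrho B"
    using norm_le_rrho[OF B n] \<open>norm \<mu> = rrho (c \<cdot>\<^sub>m B)\<close> c by (fastforce simp: norm_mult norm_divide)
  then show "rrho (c \<cdot>\<^sub>m B) \<le> c * rrho B" using c by (simp add: divide_le_eq mult.commute)
  obtain \<nu> where "\<nu> \<in> rspec B" "norm \<nu> = rrho B" using rrho_attained[OF B n] by blast
  then show "c * rrho B \<le> rrho (c \<cdot>\<^sub>m B)"
    using norm_le_rrho[OF cB n smult_mem_rspec[OF B, of \<nu> c]] c by (simp add: norm_mult)
qed

lemma pow_mat_smult: "A \<in> carrier_mat n n \<Longrightarrow> (c \<cdot>\<^sub>m A) ^\<^sub>m k = (c ^ k :: real) \<cdot>\<^sub>m A ^\<^sub>m k"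
proof (induct k)
  case (Suc k)
  then have "(c \<cdot>\<^sub>m A) ^\<^sub>m Suc k = c ^ k \<cdot>\<^sub>m (c \<cdot>\<^sub>m (A ^\<^sub>m k * A))"
    using mult_smult_assoc_mat[of "A ^\<^sub>m k" n n "c \<cdot>\<^sub>m A" n] mult_smult_distrib[of "A ^\<^sub>m k" n n A n c]
    by simp
  then show ?case using Suc.prems by (intro eq_matI) auto
qed (auto intro: eq_matI)

section \<open>Neumann series\<close>

primrec neumann_sum :: "real mat \<Rightarrow> nat \<Rightarrow> real mat" where
  "neumann_sum B 0 = 0\<^sub>m (dim_row B) (dim_row B)"
| "neumann_sum B (Suc k) = neumann_sum B k + B ^\<^sub>m k"

lemma neumann_sum_carrier [simp]: "B \<in> carrier_mat n n \<Longrightarrow> neumann_sum B k \<in> carrier_mat n n"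
  by (induct k) auto

lemma index_neumann_sum:
  "B \<in> carrier_mat n n \<Longrightarrow> i < n \<Longrightarrow> j < n \<Longrightarrow>
    neumann_sum B k $$ (i,j) = (\<Sum>l<k. (B ^\<^sub>m l) $$ (i,j))"
  by (induct k) auto

lemma nonneg_mat_neumann_sum: "B \<in> carrier_mat n n \<Longrightarrow> nonneg_mat B \<Longrightarrow> nonneg_mat (neumann_sum B k)"
  by (induct k) (auto intro!: nonneg_mat_add[of _ n n] nonneg_mat_pow)

lemma neumann_sum_mono:
  assumes "B \<in> carrier_mat n n" "C \<in> carrier_mat n n" "nonneg_mat B" "B \<le> C"
  shows "neumann_sum B k \<le> neumann_sum C k"
proof (rule less_eq_matI[OF neumann_sum_carrier[OF assms(1)] neumann_sum_carrier[OF assms(2)]])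
  fix i j assume ij: "i < n" "j < n"
  have "(B ^\<^sub>m l) $$ (i,j) \<le> (C ^\<^sub>m l) $$ (i,j)" for l
    using less_eq_matD[OF pow_mono_nonneg_mat[OF assms] _ ij] assms(2) by simp
  then show "neumann_sum B k $$ (i,j) \<le> neumann_sum C k $$ (i,j)"
    by (simp add: index_neumann_sum[OF assms(1) ij] index_neumann_sum[OF assms(2) ij] sum_mono)
qed

lemma pow_mat_mult_comm:
  assumes B: "B \<in> carrier_mat n n"
  shows "B ^\<^sub>m k * B = B * B ^\<^sub>m k"
proof (induct k)
  case (Suc k)
  have "B ^\<^sub>m Suc k * B = (B * B ^\<^sub>m k) * B" using Suc by simp
  also have "\<dots> = B * B ^\<^sub>m Suc k" using B by (simp add: assoc_mult_mat[of B n n _ n B n])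
  finally show ?case .
qed (use B in simp)

lemma neumann_sum_mult_one_minus:
  assumes B: "B \<in> carrier_mat n n"
  shows "neumann_sum B k * (1\<^sub>m n - B) = 1\<^sub>m n - B ^\<^sub>m k"
proof (induct k)
  case 0
  then show ?case using B by (intro eq_matI) auto
next
  case (Suc k)
  have S: "neumann_sum B k \<in> carrier_mat n n" and Bk: "B ^\<^sub>m k \<in> carrier_mat n n" using B by auto
  have "neumann_sum B (Suc k) * (1\<^sub>m n - B) = neumann_sum B k * (1\<^sub>m n - B) + B ^\<^sub>m k * (1\<^sub>m n - B)"
    using add_mult_distrib_mat[OF S Bk, of "1\<^sub>m n - B" n] B by simp
  also have "\<dots> = (1\<^sub>m n - B ^\<^sub>m k) + (B ^\<^sub>m k - B ^\<^sub>m k * B)"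
    using Suc mult_minus_distrib_mat[OF Bk one_carrier_mat B] right_mult_one_mat[OF Bk] by simp
  finally have "neumann_sum B (Suc k) * (1\<^sub>m n - B) = (1\<^sub>m n - B ^\<^sub>m k) + (B ^\<^sub>m k - B ^\<^sub>m k * B)" .
  then show ?case using B Bk by (intro eq_matI) auto
qed

lemma left_inverse_neumann_expansion:
  assumes B: "B \<in> carrier_mat n n" and N: "N \<in> carrier_mat n n" and NB: "N * (1\<^sub>m n - B) = 1\<^sub>m n"
  shows "N = neumann_sum B k + N * B ^\<^sub>m k"
proof (induct k)
  case 0
  then show ?case using N B by (intro eq_matI) auto
next
  case (Suc k)
  have Bk: "B ^\<^sub>m k \<in> carrier_mat n n" using B by simp
  have "N = (N - N * B) + N * B" using N B by (intro eq_matI) auto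
  also have "N - N * B = 1\<^sub>m n"
    using NB mult_minus_distrib_mat[OF N one_carrier_mat B] right_mult_one_mat[OF N] by simp
  finally have "N * B ^\<^sub>m k = (1\<^sub>m n + N * B) * B ^\<^sub>m k" by simp
  also have "\<dots> = B ^\<^sub>m k + N * (B * B ^\<^sub>m k)"
    using add_mult_distrib_mat[of "1\<^sub>m n" n n "N * B" "B ^\<^sub>m k" n] assoc_mult_mat[OF N B Bk] N B Bk
    by simp
  also have "B * B ^\<^sub>m k = B ^\<^sub>m Suc k" using pow_mat_mult_comm[OF B] by simp
  finally have "N * B ^\<^sub>m k = B ^\<^sub>m k + N * B ^\<^sub>m Suc k" .
  with Suc have "N = neumann_sum B k + (B ^\<^sub>m k + N * B ^\<^sub>m Suc k)" by simp
  also have "\<dots> = neumann_sum B (Suc k) + N * B ^\<^sub>m Suc k"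
    using N B Bk by (intro eq_matI) auto
  finally show ?case .
qed

lemma index_left_inverse_neumann_expansion:
  assumes B: "B \<in> carrier_mat n n" and N: "N \<in> carrier_mat n n" and NB: "N * (1\<^sub>m n - B) = 1\<^sub>m n"
    and "i < n" "j < n"
  shows "N $$ (i,j) = neumann_sum B k $$ (i,j) + (N * B ^\<^sub>m k) $$ (i,j)"
proof -
  have "dim_row (N * B ^\<^sub>m k) = n" "dim_col (N * B ^\<^sub>m k) = n" using B N by auto
  then show ?thesis
    using arg_cong[OF left_inverse_neumann_expansion[OF B N NB, of k], of "\<lambda>M. M $$ (i,j)"] assms(4,5)
    by simp
qed

lemma neumann_sum_le_left_inverse:
  assumes B: "B \<in> carrier_mat n n" and N: "N \<in> carrier_mat n n"
    and "nonneg_mat B" "nonneg_mat N" and NB: "N * (1\<^sub>m n - B) = 1\<^sub>m n"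
  shows "neumann_sum B k \<le> N"
proof -
  have "nonneg_mat (N * B ^\<^sub>m k)" using assms by (auto intro: nonneg_mat_mult nonneg_mat_pow)
  then have rest: "0 \<le> (N * B ^\<^sub>m k) $$ (i,j)" if "i < n" "j < n" for i j
    using nonneg_matD[OF _ mult_carrier_mat[OF N pow_carrier_mat[OF B]] that] by blast
  show ?thesis
  proof (rule less_eq_matI[OF neumann_sum_carrier[OF B] N])
    fix i j assume "i < n" "j < n"
    then show "neumann_sum B k $$ (i,j) \<le> N $$ (i,j)"
      using index_left_inverse_neumann_expansion[OF B N NB, of i j k] rest[of i j] by linarith
  qed
qed

lemma norm_of_real_mult_nonneg: "0 \<le> x \<Longrightarrow> norm (complex_of_real x * z) = x * norm z"
  by (simp add: norm_mult)

lemma eigenvector_pow_norm_le: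
  assumes B: "B \<in> carrier_mat n n" and "nonneg_mat B"
    and ev: "eigenvector (map_mat complex_of_real B) v \<mu>" and i: "i < n"
  shows "norm \<mu> ^ l * norm (v $ i) \<le> (\<Sum>j<n. (B ^\<^sub>m l) $$ (i,j) * norm (v $ j))"
proof -
  have v: "v \<in> carrier_vec n" using ev B unfolding eigenvector_def by auto
  have Bc: "map_mat complex_of_real B \<in> carrier_mat n n" using B by simp
  have "map_mat complex_of_real (B ^\<^sub>m l) *\<^sub>v v = \<mu> ^ l \<cdot>\<^sub>v v"
    unfolding of_real_hom.mat_hom_pow[OF B] by (rule eigenvector_pow[OF Bc ev])
  then have "(map_mat complex_of_real (B ^\<^sub>m l) *\<^sub>v v) $ i = \<mu> ^ l * v $ i" using v i by simp
  then have eq: "\<mu> ^ l * v $ i = (\<Sum>j<n. complex_of_real ((B ^\<^sub>m l) $$ (i,j)) * v $ j)"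
    using v i B by (simp add: scalar_prod_def lessThan_atLeast0)
  have "norm \<mu> ^ l * norm (v $ i) = norm (\<mu> ^ l * v $ i)" by (simp add: norm_mult norm_power)
  also have "\<dots> = norm (\<Sum>j<n. complex_of_real ((B ^\<^sub>m l) $$ (i,j)) * v $ j)"
    by (simp only: eq)
  also have "\<dots> \<le> (\<Sum>j<n. norm (complex_of_real ((B ^\<^sub>m l) $$ (i,j)) * v $ j))"
    by (rule norm_sum)
  also have "\<dots> = (\<Sum>j<n. (B ^\<^sub>m l) $$ (i,j) * norm (v $ j))"
  proof (rule sum.cong[OF refl])
    fix j assume "j \<in> {..<n}"
    then have "0 \<le> (B ^\<^sub>m l) $$ (i,j)"
      using nonneg_mat_pow[OF assms(1,2), of l] B i unfolding nonneg_mat_def by simp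
    then show "norm (complex_of_real ((B ^\<^sub>m l) $$ (i,j)) * v $ j) = (B ^\<^sub>m l) $$ (i,j) * norm (v $ j)"
      by (rule norm_of_real_mult_nonneg)
  qed
  finally show ?thesis .
qed

lemma rrho_less_1_if_neumann_sum_bounded:
  assumes B: "B \<in> carrier_mat n n" and n: "0 < n" and nB: "nonneg_mat B"
    and bounded: "\<And>i j. i < n \<Longrightarrow> j < n \<Longrightarrow> bdd_above (range (\<lambda>k. neumann_sum B k $$ (i,j)))"
  shows "rrho B < 1"
proof (rule ccontr)
  assume "\<not> rrho B < 1"
  then obtain \<mu> where "\<mu> \<in> rspec B" and \<mu>: "1 \<le> norm \<mu>"
    using rrho_attained[OF B n] by fastforce
  then obtain v where ev: "eigenvector (map_mat complex_of_real B) v \<mu>"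
    unfolding rspec_def spectrum_def eigenvalue_def by auto
  then have v: "v \<in> carrier_vec n" "v \<noteq> 0\<^sub>v n" using B unfolding eigenvector_def by auto
  have "\<exists>i<n. v $ i \<noteq> 0"
  proof (rule ccontr)
    assume "\<not> (\<exists>i<n. v $ i \<noteq> 0)"
    then have "v = 0\<^sub>v n" using v by (intro eq_vecI) auto
    with v show False by simp
  qed
  then obtain i where i: "i < n" and vi: "v $ i \<noteq> 0" by blast
  (* Since |mu| >= 1, |v_i| <= (B^l |v|)_i for every l; summing over l < k bounds k |v_i| by D. *)
  define D where "D = (\<Sum>j<n. (SUP k. neumann_sum B k $$ (i,j)) * norm (v $ j))"
  obtain k where k: "D / norm (v $ i) < real k" using reals_Archimedean2 by blast
  have "real k * norm (v $ i) \<le> D"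
  proof -
    have "real k * norm (v $ i) = (\<Sum>l<k. 1 * norm (v $ i))" by simp
    also have "\<dots> \<le> (\<Sum>l<k. norm \<mu> ^ l * norm (v $ i))"
      using \<mu> by (intro sum_mono mult_right_mono one_le_power) auto
    also have "\<dots> \<le> (\<Sum>l<k. \<Sum>j<n. (B ^\<^sub>m l) $$ (i,j) * norm (v $ j))"
      by (intro sum_mono eigenvector_pow_norm_le[OF B nB ev i])
    also have "\<dots> = (\<Sum>j<n. \<Sum>l<k. (B ^\<^sub>m l) $$ (i,j) * norm (v $ j))"
      by (rule sum.swap)
    also have "\<dots> = (\<Sum>j<n. neumann_sum B k $$ (i,j) * norm (v $ j))"
      using B i by (simp add: index_neumann_sum sum_distrib_right)
    also have "\<dots> \<le> D"
      unfolding D_def using i by (intro sum_mono mult_right_mono cSUP_upper bounded) auto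
    finally show ?thesis .
  qed
  with k vi show False by (simp add: divide_less_eq)
qed

lemma rrho_less_1_if_neumann_sum_le:
  assumes B: "B \<in> carrier_mat n n" and n: "0 < n" and nB: "nonneg_mat B"
    and le: "\<And>k. neumann_sum B k \<le> X"
  shows "rrho B < 1"
proof (rule rrho_less_1_if_neumann_sum_bounded[OF B n nB])
  have "dim_row X = n" "dim_col X = n" using le[of 0] B by (auto simp: less_eq_mat_def)
  moreover fix i j assume "i < n" "j < n"
  ultimately show "bdd_above (range (\<lambda>k. neumann_sum B k $$ (i,j)))"
    using le unfolding less_eq_mat_def by (intro bdd_aboveI2[of _ _ "X $$ (i,j)"]) auto
qed

lemma rrho_less_1_if_nonneg_left_inverse:
  assumes B: "B \<in> carrier_mat n n" and n: "0 < n" and nB: "nonneg_mat B"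
    and N: "N \<in> carrier_mat n n" "nonneg_mat N" "N * (1\<^sub>m n - B) = 1\<^sub>m n"
  shows "rrho B < 1"
  by (rule rrho_less_1_if_neumann_sum_le[OF B n nB neumann_sum_le_left_inverse[OF B N(1) nB N(2,3)]])

lemma pow_mat_tendsto_0_if_rrho_less_1:
  assumes B: "B \<in> carrier_mat n n" and n: "0 < n" and r: "rrho B < 1" and i: "i < n" and j: "j < n"
  shows "(\<lambda>k. (B ^\<^sub>m k) $$ (i,j)) \<longlonglongrightarrow> 0"
proof -
  define s where "s = (rrho B + 1) / 2"
  have s: "0 < s" "s < 1" "rrho B < s" using r rrho_nonneg[OF B n] unfolding s_def by auto
  let ?B = "map_mat complex_of_real ((1 / s) \<cdot>\<^sub>m B)"
  have "rrho ((1 / s) \<cdot>\<^sub>m B) < 1" using rrho_smult[OF B n, of "1 / s"] s by simp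
  then obtain c where c: "\<And>k. norm_bound (?B ^\<^sub>m k) c"
    using spectral_radius_jnf_norm_bound_less_1_upper_triangular[of ?B n] B unfolding rrho_def by auto
  have bound: "norm ((B ^\<^sub>m k) $$ (i,j)) \<le> norm (s ^ k) * c" for k
  proof -
    have "?B ^\<^sub>m k = map_mat complex_of_real (((1 / s) \<cdot>\<^sub>m B) ^\<^sub>m k)"
      by (rule of_real_hom.mat_hom_pow[of "(1 / s) \<cdot>\<^sub>m B" n k, symmetric]) (use B in simp)
    also have "((1 / s) \<cdot>\<^sub>m B) ^\<^sub>m k = (1 / s) ^ k \<cdot>\<^sub>m B ^\<^sub>m k" by (rule pow_mat_smult[OF B])
    finally have "(?B ^\<^sub>m k) $$ (i,j) = complex_of_real ((1 / s) ^ k * (B ^\<^sub>m k) $$ (i,j))"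
      using i j B by simp
    moreover have "norm ((?B ^\<^sub>m k) $$ (i,j)) \<le> c"
      using c[of k] i j B unfolding norm_bound_def by simp
    ultimately have "(1 / s) ^ k * \<bar>(B ^\<^sub>m k) $$ (i,j)\<bar> \<le> c"
      using s by (simp add: norm_mult norm_power norm_divide)
    then show ?thesis using s by (simp add: power_one_over pos_divide_le_eq mult.commute)
  qed
  have "(\<lambda>k. s ^ k) \<longlonglongrightarrow> 0" using s by (simp add: LIMSEQ_power_zero)
  then show ?thesis by (rule tendsto_0_le[where K = c]) (intro always_eventually allI bound)
qed

lemma nonneg_left_inverse_if_rrho_less_1:
  assumes B: "B \<in> carrier_mat n n" and n: "0 < n" and nB: "nonneg_mat B" and r: "rrho B < 1"
  shows "\<exists>N \<in> carrier_mat n n. nonneg_mat N \<and> N * (1\<^sub>m n - B) = 1\<^sub>m n"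
proof -
  have "1 \<notin> rspec B" using norm_le_rrho[OF B n] r by fastforce
  then have "det (1\<^sub>m n - B) \<noteq> 0" by (rule det_one_minus_neq_0[OF B])
  note inv = minv_inverse[OF _ this] B
  define N where "N = minv (1\<^sub>m n - B)"
  have N: "N \<in> carrier_mat n n" "N * (1\<^sub>m n - B) = 1\<^sub>m n" using inv unfolding N_def by simp_all
  have "0 \<le> N $$ (i,j)" if i: "i < n" and j: "j < n" for i j
  proof -
    have "(N * B ^\<^sub>m k) $$ (i,j) = (\<Sum>l<n. N $$ (i,l) * (B ^\<^sub>m k) $$ (l,j))" for k
      using N B i j by (simp add: scalar_prod_def lessThan_atLeast0)
    moreover have "(\<lambda>k. \<Sum>l<n. N $$ (i,l) * (B ^\<^sub>m k) $$ (l,j)) \<longlonglongrightarrow> 0"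
      using pow_mat_tendsto_0_if_rrho_less_1[OF B n r _ j]
      by (intro tendsto_null_sum tendsto_mult_right_zero) auto
    ultimately have lim: "(\<lambda>k. (N * B ^\<^sub>m k) $$ (i,j)) \<longlonglongrightarrow> 0" by simp
    have "(N * B ^\<^sub>m k) $$ (i,j) \<le> N $$ (i,j)" for k
      using index_left_inverse_neumann_expansion[OF B N i j, of k]
        nonneg_matD[OF nonneg_mat_neumann_sum[OF B nB] _ i j] B by simp
    then show ?thesis
      by (intro tendsto_upperbound[OF lim] always_eventually allI) simp_all
  qed
  then show ?thesis using N unfolding nonneg_mat_def by auto
qed

lemma rrho_less_1_iff_nonneg_left_inverse:
  assumes "B \<in> carrier_mat n n" "0 < n" "nonneg_mat B"
  shows "rrho B < 1 \<longleftrightarrow> (\<exists>N \<in> carrier_mat n n. nonneg_mat N \<and> N * (1\<^sub>m n - B) = 1\<^sub>m n)"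
  using nonneg_left_inverse_if_rrho_less_1[OF assms] rrho_less_1_if_nonneg_left_inverse[OF assms]
  by blast

lemma rrho_less_1_mono:
  assumes B: "B \<in> carrier_mat n n" and C: "C \<in> carrier_mat n n" and n: "0 < n"
    and nB: "nonneg_mat B" and BC: "B \<le> C" and r: "rrho C < 1"
  shows "rrho B < 1"
proof -
  have nC: "nonneg_mat C" using nonneg_mat_le[OF nB BC] .
  obtain K where K: "K \<in> carrier_mat n n" "nonneg_mat K" "K * (1\<^sub>m n - C) = 1\<^sub>m n"
    using nonneg_left_inverse_if_rrho_less_1[OF C n nC r] by blast
  show ?thesis
  proof (rule rrho_less_1_if_neumann_sum_le[OF B n nB])
    fix k
    show "neumann_sum B k \<le> K"
      using neumann_sum_mono[OF B C nB BC] neumann_sum_le_left_inverse[OF C K(1) nC K(2,3)]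
      by (rule order.trans)
  qed
qed

lemma nonneg_mat_row_has_pos_entry:
  assumes Q: "Q \<in> carrier_mat n n" and P: "P \<in> carrier_mat n n" and QP: "Q * P = 1\<^sub>m n"
    and nQ: "nonneg_mat Q" and m: "m < n"
  shows "\<exists>l<n. 0 < Q $$ (m,l)"
proof (rule ccontr)
  assume "\<not> (\<exists>l<n. 0 < Q $$ (m,l))"
  then have "Q $$ (m,l) = 0" if "l < n" for l
    using nonneg_matD[OF nQ Q m that] that by fastforce
  then have "(Q * P) $$ (m,m) = 0" using Q P m by (simp add: scalar_prod_def)
  with QP m show False by simp
qed

lemma rrho_less_1_if_weak_regular_splitting:
  assumes A: "A \<in> carrier_mat n n" and P: "P \<in> carrier_mat n n" and B: "B \<in> carrier_mat n n"
    and n: "0 < n" and dP: "det P \<noteq> 0" and dA: "det A \<noteq> 0"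
    and nPi: "nonneg_mat (minv P)" and nAi: "nonneg_mat (minv A)" and nB: "nonneg_mat B"
    and split: "minv P * A = 1\<^sub>m n - B"
  shows "rrho B < 1"
proof (rule rrho_less_1_if_neumann_sum_bounded[OF B n nB])
  note Pi = minv_inverse[OF P dP] and Ai = minv_inverse[OF A dA]
  have le: "neumann_sum B k * minv P \<le> minv A" for k
  proof -
    have S: "neumann_sum B k \<in> carrier_mat n n" and Bk: "B ^\<^sub>m k \<in> carrier_mat n n" using B by auto
    have "neumann_sum B k * minv P = neumann_sum B k * (minv P * A) * minv A"
      using S Pi Ai A by (simp add: assoc_mult_mat[of _ n n _ n _ n])
    also have "\<dots> = minv A - B ^\<^sub>m k * minv A"
      using neumann_sum_mult_one_minus[OF B, of k] Bk Ai
      by (simp add: split minus_mult_distrib_mat[of _ n n _ _ n])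
    finally have eq: "neumann_sum B k * minv P = minv A - B ^\<^sub>m k * minv A" .
    have "nonneg_mat (B ^\<^sub>m k * minv A)"
      using Bk Ai nAi nonneg_mat_pow[OF B nB] by (auto intro: nonneg_mat_mult)
    then show ?thesis
      unfolding eq using Bk Ai by (intro less_eq_matI[of _ n n]) (auto simp: nonneg_mat_def)
  qed
  (* A positive entry of P^-1 in row m converts the bound on row i of neumann_sum B k * P^-1 into
     a bound on the entry (i, m) of neumann_sum B k. *)
  fix i m assume i: "i < n" and m: "m < n"
  obtain l where l: "l < n" and pos: "0 < minv P $$ (m,l)"
    using nonneg_mat_row_has_pos_entry[OF Pi(1) P Pi(3) nPi m] by blast
  have "neumann_sum B k $$ (i,m) \<le> minv A $$ (i,l) / minv P $$ (m,l)" for k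
  proof -
    have S: "neumann_sum B k \<in> carrier_mat n n" using B by simp
    have "neumann_sum B k $$ (i,m) * minv P $$ (m,l) \<le> (\<Sum>p<n. neumann_sum B k $$ (i,p) * minv P $$ (p,l))"
      using m nonneg_matD[OF nonneg_mat_neumann_sum[OF B nB] S i] nonneg_matD[OF nPi Pi(1) _ l]
      by (intro member_le_sum) auto
    also have "\<dots> = (neumann_sum B k * minv P) $$ (i,l)"
      using S Pi i l by (simp add: scalar_prod_def lessThan_atLeast0)
    also have "\<dots> \<le> minv A $$ (i,l)" using less_eq_matD[OF le Ai(1) i l] .
    finally show ?thesis using pos by (simp add: le_divide_eq)
  qed
  then show "bdd_above (range (\<lambda>k. neumann_sum B k $$ (i,m)))" by (intro bdd_aboveI2)
qed

section \<open>Block companion matrices\<close>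

lemma four_block_mat_eq_iff:
  assumes "A \<in> carrier_mat n1 m1" "A' \<in> carrier_mat n1 m1" "B \<in> carrier_mat n1 m2" "B' \<in> carrier_mat n1 m2"
    and "C \<in> carrier_mat n2 m1" "C' \<in> carrier_mat n2 m1" "D \<in> carrier_mat n2 m2" "D' \<in> carrier_mat n2 m2"
  shows "four_block_mat A B C D = four_block_mat A' B' C' D' \<longleftrightarrow> A = A' \<and> B = B' \<and> C = C' \<and> D = D'"
proof
  assume "four_block_mat A B C D = four_block_mat A' B' C' D'"
  then have e: "four_block_mat A B C D $$ (i,j) = four_block_mat A' B' C' D' $$ (i,j)" for i j
    by simp
  have "A = A'"
  proof (rule eq_matI)
    fix i j assume "i < dim_row A'" "j < dim_col A'"
    with e[of i j] assms show "A $$ (i,j) = A' $$ (i,j)" by auto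
  qed (use assms in auto)
  moreover have "B = B'"
  proof (rule eq_matI)
    fix i j assume "i < dim_row B'" "j < dim_col B'"
    with e[of i "m1 + j"] assms show "B $$ (i,j) = B' $$ (i,j)" by auto
  qed (use assms in auto)
  moreover have "C = C'"
  proof (rule eq_matI)
    fix i j assume "i < dim_row C'" "j < dim_col C'"
    with e[of "n1 + i" j] assms show "C $$ (i,j) = C' $$ (i,j)" by auto
  qed (use assms in auto)
  moreover have "D = D'"
  proof (rule eq_matI)
    fix i j assume "i < dim_row D'" "j < dim_col D'"
    with e[of "n1 + i" "m1 + j"] assms show "D $$ (i,j) = D' $$ (i,j)" by auto
  qed (use assms in auto)
  ultimately show "A = A' \<and> B = B' \<and> C = C' \<and> D = D'" by blast
qed auto

lemma mult_smult_one_mat: "(X :: real mat) \<in> carrier_mat n n \<Longrightarrow> X * (c \<cdot>\<^sub>m 1\<^sub>m n) = c \<cdot>\<^sub>m X"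
  using mult_smult_distrib[of X n n "1\<^sub>m n" n c] by simp

lemma mult_one_minus_add_smult:
  assumes "(X :: real mat) \<in> carrier_mat n n" "T \<in> carrier_mat n n" "U \<in> carrier_mat n n"
  shows "X * (1\<^sub>m n - (T + c \<cdot>\<^sub>m U)) = X * (1\<^sub>m n - T) - c \<cdot>\<^sub>m (X * U)"
proof -
  have "1\<^sub>m n - (T + c \<cdot>\<^sub>m U) = (1\<^sub>m n - T) - c \<cdot>\<^sub>m U" using assms by (intro eq_matI) auto
  then show ?thesis
    using assms mult_minus_distrib_mat[of X n n "1\<^sub>m n - T" n "c \<cdot>\<^sub>m U"] mult_smult_distrib[of X n n U n c]
    by simp
qed

lemma one_minus_block_companion:
  assumes "(T :: real mat) \<in> carrier_mat n n" "U \<in> carrier_mat n n"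
  shows "1\<^sub>m (n+n) - four_block_mat T U (c \<cdot>\<^sub>m 1\<^sub>m n) (0\<^sub>m n n)
    = four_block_mat (1\<^sub>m n - T) (- U) (- (c \<cdot>\<^sub>m 1\<^sub>m n)) (1\<^sub>m n)"
  using assms by (intro eq_matI) auto

lemma block_companion_left_inverse:
  assumes T: "(T :: real mat) \<in> carrier_mat n n" and U: "U \<in> carrier_mat n n" and K: "K \<in> carrier_mat n n"
    and KB: "K * (1\<^sub>m n - (T + c \<cdot>\<^sub>m U)) = 1\<^sub>m n"
  shows "four_block_mat K (K * U) (c \<cdot>\<^sub>m K) (1\<^sub>m n + c \<cdot>\<^sub>m (K * U))
      * (1\<^sub>m (n+n) - four_block_mat T U (c \<cdot>\<^sub>m 1\<^sub>m n) (0\<^sub>m n n)) = 1\<^sub>m (n+n)"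
proof -
  define M where "M = K * (1\<^sub>m n - T)"
  define KU where "KU = K * U"
  have M: "M \<in> carrier_mat n n" and KU: "KU \<in> carrier_mat n n" unfolding M_def KU_def using K T U by auto
  have MKU: "M - c \<cdot>\<^sub>m KU = 1\<^sub>m n"
    using KB mult_one_minus_add_smult[OF K T U] unfolding M_def KU_def by simp
  have MKU_index: "M $$ (i,j) - c * KU $$ (i,j) = 1\<^sub>m n $$ (i,j)" if "i < n" "j < n" for i j
  proof -
    have "(M - c \<cdot>\<^sub>m KU) $$ (i,j) = 1\<^sub>m n $$ (i,j)" by (simp only: MKU)
    then show ?thesis using that M KU by simp
  qed
  have "four_block_mat K KU (c \<cdot>\<^sub>m K) (1\<^sub>m n + c \<cdot>\<^sub>m KU) * (1\<^sub>m (n+n) - four_block_mat T U (c \<cdot>\<^sub>m 1\<^sub>m n) (0\<^sub>m n n))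
     = four_block_mat (M + KU * (- (c \<cdot>\<^sub>m 1\<^sub>m n))) (K * (- U) + KU * 1\<^sub>m n)
         ((c \<cdot>\<^sub>m K) * (1\<^sub>m n - T) + (1\<^sub>m n + c \<cdot>\<^sub>m KU) * (- (c \<cdot>\<^sub>m 1\<^sub>m n)))
         ((c \<cdot>\<^sub>m K) * (- U) + (1\<^sub>m n + c \<cdot>\<^sub>m KU) * 1\<^sub>m n)"
    unfolding one_minus_block_companion[OF T U] M_def
    by (rule mult_four_block_mat) (use K KU T U in auto)
  also have "\<dots> = four_block_mat (1\<^sub>m n) (0\<^sub>m n n) (0\<^sub>m n n) (1\<^sub>m n)"
  proof -
    have "KU * (- (c \<cdot>\<^sub>m 1\<^sub>m n)) = - (c \<cdot>\<^sub>m KU)"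
      and "(1\<^sub>m n + c \<cdot>\<^sub>m KU) * (- (c \<cdot>\<^sub>m 1\<^sub>m n)) = - (c \<cdot>\<^sub>m (1\<^sub>m n + c \<cdot>\<^sub>m KU))"
      using KU by (simp_all add: mult_smult_one_mat)
    moreover have "(c \<cdot>\<^sub>m K) * (1\<^sub>m n - T) = c \<cdot>\<^sub>m M"
      unfolding M_def using mult_smult_assoc_mat[OF K, of "1\<^sub>m n - T" n c] T by simp
    moreover have "K * (- U) = - KU" unfolding KU_def using K U by simp
    moreover have "(c \<cdot>\<^sub>m K) * (- U) = c \<cdot>\<^sub>m (- KU)"
      unfolding KU_def using mult_smult_assoc_mat[OF K, of "- U" n c] K U by simp
    moreover have "c \<cdot>\<^sub>m (- KU) = - (c \<cdot>\<^sub>m KU)" using KU by (intro eq_matI) auto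
    moreover have "KU * 1\<^sub>m n = KU" and "(1\<^sub>m n + c \<cdot>\<^sub>m KU) * 1\<^sub>m n = 1\<^sub>m n + c \<cdot>\<^sub>m KU"
      using KU by simp_all
    ultimately show ?thesis
      using M KU MKU_index by (simp only:) (intro cong_four_block_mat eq_matI; auto simp: algebra_simps)
  qed
  finally show ?thesis unfolding KU_def by simp
qed

lemma one_minus_block_companion_nonneg_left_inverseI:
  assumes T: "(T :: real mat) \<in> carrier_mat n n" and U: "U \<in> carrier_mat n n" and K: "K \<in> carrier_mat n n"
    and nK: "nonneg_mat K" and nU: "nonneg_mat U" and c: "0 \<le> c"
    and KB: "K * (1\<^sub>m n - (T + c \<cdot>\<^sub>m U)) = 1\<^sub>m n"
  shows "\<exists>N \<in> carrier_mat (n+n) (n+n). nonneg_mat N \<and>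
    N * (1\<^sub>m (n+n) - four_block_mat T U (c \<cdot>\<^sub>m 1\<^sub>m n) (0\<^sub>m n n)) = 1\<^sub>m (n+n)"
proof (intro bexI conjI)
  show "nonneg_mat (four_block_mat K (K * U) (c \<cdot>\<^sub>m K) (1\<^sub>m n + c \<cdot>\<^sub>m (K * U)))"
    using K U nK nU c
    by (intro nonneg_mat_four_block[of _ n n] nonneg_mat_add[of _ n n] nonneg_mat_smult nonneg_mat_mult) auto
qed (use block_companion_left_inverse[OF T U K KB] K U in auto)

lemma one_minus_block_companion_nonneg_left_inverseD:
  assumes T: "(T :: real mat) \<in> carrier_mat n n" and U: "U \<in> carrier_mat n n"
    and N: "N \<in> carrier_mat (n+n) (n+n)" and nN: "nonneg_mat N"
    and NW: "N * (1\<^sub>m (n+n) - four_block_mat T U (c \<cdot>\<^sub>m 1\<^sub>m n) (0\<^sub>m n n)) = 1\<^sub>m (n+n)"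
  shows "\<exists>K \<in> carrier_mat n n. nonneg_mat K \<and> K * (1\<^sub>m n - (T + c \<cdot>\<^sub>m U)) = 1\<^sub>m n"
proof -
  obtain N1 N2 N3 N4 where "split_block N n n = (N1, N2, N3, N4)" by (metis prod_cases4)
  note blocks = split_block[OF this, of n n]
  have N1: "N1 \<in> carrier_mat n n" and N2: "N2 \<in> carrier_mat n n"
    and N3: "N3 \<in> carrier_mat n n" and N4: "N4 \<in> carrier_mat n n"
    and Ne: "N = four_block_mat N1 N2 N3 N4" using blocks N by auto
  have "four_block_mat (1\<^sub>m n) (0\<^sub>m n n) (0\<^sub>m n n) (1\<^sub>m n)
      = N * four_block_mat (1\<^sub>m n - T) (- U) (- (c \<cdot>\<^sub>m 1\<^sub>m n)) (1\<^sub>m n)"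
    using NW one_minus_block_companion[OF T U] by simp
  also have "\<dots> = four_block_mat (N1 * (1\<^sub>m n - T) + N2 * (- (c \<cdot>\<^sub>m 1\<^sub>m n))) (N1 * (- U) + N2 * 1\<^sub>m n)
      (N3 * (1\<^sub>m n - T) + N4 * (- (c \<cdot>\<^sub>m 1\<^sub>m n))) (N3 * (- U) + N4 * 1\<^sub>m n)"
    unfolding Ne by (rule mult_four_block_mat) (use N1 N2 N3 N4 T U in auto)
  finally have "1\<^sub>m n = N1 * (1\<^sub>m n - T) + N2 * (- (c \<cdot>\<^sub>m 1\<^sub>m n))" and "0\<^sub>m n n = N1 * (- U) + N2 * 1\<^sub>m n"
    by (subst (asm) four_block_mat_eq_iff; use N1 N2 N3 N4 T U in auto)+
  then have e1: "1\<^sub>m n = N1 * (1\<^sub>m n - T) + - (c \<cdot>\<^sub>m N2)" and e2: "0\<^sub>m n n = - (N1 * U) + N2"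
    using N1 N2 U by (simp_all add: mult_smult_one_mat)
  have "N2 = N1 * U"
  proof (rule eq_matI)
    fix i j assume "i < dim_row (N1 * U)" "j < dim_col (N1 * U)"
    with arg_cong[OF e2, of "\<lambda>X. X $$ (i,j)"] N1 N2 U show "N2 $$ (i,j) = (N1 * U) $$ (i,j)" by simp
  qed (use N1 N2 U in auto)
  then have "N1 * (1\<^sub>m n - (T + c \<cdot>\<^sub>m U)) = N1 * (1\<^sub>m n - T) - c \<cdot>\<^sub>m N2"
    using mult_one_minus_add_smult[OF N1 T U] by simp
  also have "\<dots> = N1 * (1\<^sub>m n - T) + - (c \<cdot>\<^sub>m N2)" using N1 N2 T by (intro eq_matI) auto
  also have "\<dots> = 1\<^sub>m n" using e1 by simp
  finally show ?thesis
    using N1 nonneg_mat_four_block_upper_left[OF N1 N4] nN Ne by blast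
qed

lemma rrho_block_companion_less_1_iff:
  assumes T: "(T :: real mat) \<in> carrier_mat n n" and U: "U \<in> carrier_mat n n" and n: "0 < n"
    and nT: "nonneg_mat T" and nU: "nonneg_mat U" and c: "0 \<le> c"
  shows "rrho (four_block_mat T U (c \<cdot>\<^sub>m 1\<^sub>m n) (0\<^sub>m n n)) < 1 \<longleftrightarrow> rrho (T + c \<cdot>\<^sub>m U) < 1"
proof -
  have W: "four_block_mat T U (c \<cdot>\<^sub>m 1\<^sub>m n) (0\<^sub>m n n) \<in> carrier_mat (n+n) (n+n)" using T by auto
  have nW: "nonneg_mat (four_block_mat T U (c \<cdot>\<^sub>m 1\<^sub>m n) (0\<^sub>m n n))"
    using T U nT nU c by (intro nonneg_mat_four_block[of _ n n] nonneg_mat_smult) auto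
  have nS: "nonneg_mat (T + c \<cdot>\<^sub>m U)" using T U nT nU c by (intro nonneg_mat_add[of _ n n] nonneg_mat_smult) auto
  have nn: "0 < n + n" using n by simp
  have S: "T + c \<cdot>\<^sub>m U \<in> carrier_mat n n" using T U by simp
  show ?thesis
    unfolding rrho_less_1_iff_nonneg_left_inverse[OF W nn nW] rrho_less_1_iff_nonneg_left_inverse[OF S n nS]
  proof
    assume "\<exists>N \<in> carrier_mat (n+n) (n+n). nonneg_mat N \<and>
      N * (1\<^sub>m (n+n) - four_block_mat T U (c \<cdot>\<^sub>m 1\<^sub>m n) (0\<^sub>m n n)) = 1\<^sub>m (n+n)"
    then show "\<exists>K \<in> carrier_mat n n. nonneg_mat K \<and> K * (1\<^sub>m n - (T + c \<cdot>\<^sub>m U)) = 1\<^sub>m n"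
      using one_minus_block_companion_nonneg_left_inverseD[OF T U] by blast
  next
    assume "\<exists>K \<in> carrier_mat n n. nonneg_mat K \<and> K * (1\<^sub>m n - (T + c \<cdot>\<^sub>m U)) = 1\<^sub>m n"
    then show "\<exists>N \<in> carrier_mat (n+n) (n+n). nonneg_mat N \<and>
      N * (1\<^sub>m (n+n) - four_block_mat T U (c \<cdot>\<^sub>m 1\<^sub>m n) (0\<^sub>m n n)) = 1\<^sub>m (n+n)"
      using one_minus_block_companion_nonneg_left_inverseI[OF T U _ _ nU c] by blast
  qed
qed

lemma rrho_le_if_scaled_less_1:
  assumes X: "X \<in> carrier_mat n n" and Y: "Y \<in> carrier_mat n n" and n: "0 < n"
    and rX: "rrho X < 1"
    and scaled: "\<And>c. 1 \<le> c \<Longrightarrow> rrho (c \<cdot>\<^sub>m X) < 1 \<Longrightarrow> rrho (c \<cdot>\<^sub>m Y) < 1"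
  shows "rrho Y \<le> rrho X"
proof (rule ccontr)
  assume "\<not> rrho Y \<le> rrho X"
  define t where "t = (rrho X + min (rrho Y) 1) / 2"
  have t: "0 < t" "rrho X < t" "t < rrho Y" "t \<le> 1"
    using \<open>\<not> rrho Y \<le> rrho X\<close> rX rrho_nonneg[OF X n] unfolding t_def by (auto simp: min_def)
  have "rrho ((1 / t) \<cdot>\<^sub>m X) < 1" using rrho_smult[OF X n, of "1 / t"] t by simp
  then have "rrho ((1 / t) \<cdot>\<^sub>m Y) < 1" using scaled t by simp
  then have "rrho Y < t" using rrho_smult[OF Y n, of "1 / t"] t by simp
  with t show False by simp
qed

lemma scaled_block_sum_le:
  assumes T: "(T :: real mat) \<in> carrier_mat n n" and U: "U \<in> carrier_mat n n"
    and T': "T' \<in> carrier_mat n n" and U': "U' \<in> carrier_mat n n"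
    and c: "1 \<le> c" and TT': "T \<le> T'" and sum: "T' + U' \<le> T + U"
  shows "c \<cdot>\<^sub>m T' + c \<cdot>\<^sub>m (c \<cdot>\<^sub>m U') \<le> c \<cdot>\<^sub>m T + c \<cdot>\<^sub>m (c \<cdot>\<^sub>m U)"
proof (rule less_eq_matI[of _ n n])
  fix i j assume i: "i < n" and j: "j < n"
  have d: "0 \<le> T' $$ (i,j) - T $$ (i,j)" using less_eq_matD[OF TT' T' i j] by simp
  have s: "U' $$ (i,j) \<le> U $$ (i,j) - (T' $$ (i,j) - T $$ (i,j))"
    using less_eq_matD[OF sum _ i j] T U T' U' i j by simp
  have "c * c * U' $$ (i,j) \<le> c * c * (U $$ (i,j) - (T' $$ (i,j) - T $$ (i,j)))"
    using s c by (intro mult_left_mono) auto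
  moreover have "0 \<le> (c * c - c) * (T' $$ (i,j) - T $$ (i,j))"
    using c d by (intro mult_nonneg_nonneg) (auto simp: mult_le_cancel_left1)
  ultimately show "(c \<cdot>\<^sub>m T' + c \<cdot>\<^sub>m (c \<cdot>\<^sub>m U')) $$ (i,j) \<le> (c \<cdot>\<^sub>m T + c \<cdot>\<^sub>m (c \<cdot>\<^sub>m U)) $$ (i,j)"
    using T U T' U' i j by (simp add: algebra_simps)
qed (use T U T' U' in auto)

lemma rrho_block_companion_le:
  assumes T: "(T :: real mat) \<in> carrier_mat n n" and U: "U \<in> carrier_mat n n"
    and T': "T' \<in> carrier_mat n n" and U': "U' \<in> carrier_mat n n" and n: "0 < n"
    and nT: "nonneg_mat T" and nU: "nonneg_mat U" and nT': "nonneg_mat T'" and nU': "nonneg_mat U'"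
    and TT': "T \<le> T'" and sum: "T' + U' \<le> T + U" and r: "rrho (T + U) < 1"
  shows "rrho (four_block_mat T' U' (1\<^sub>m n) (0\<^sub>m n n)) \<le> rrho (four_block_mat T U (1\<^sub>m n) (0\<^sub>m n n))
    \<and> rrho (four_block_mat T U (1\<^sub>m n) (0\<^sub>m n n)) < 1"
proof -
  have scaled_iff: "rrho (c \<cdot>\<^sub>m four_block_mat X Y (1\<^sub>m n) (0\<^sub>m n n)) < 1
      \<longleftrightarrow> rrho (c \<cdot>\<^sub>m X + c \<cdot>\<^sub>m (c \<cdot>\<^sub>m Y)) < 1"
    if X: "X \<in> carrier_mat n n" and Y: "Y \<in> carrier_mat n n" and "nonneg_mat X" "nonneg_mat Y" "0 \<le> c"
    for X Y and c :: real
    using smult_four_block_mat[OF X Y one_carrier_mat zero_carrier_mat, of c] that n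
      rrho_block_companion_less_1_iff[of "c \<cdot>\<^sub>m X" n "c \<cdot>\<^sub>m Y" c] by (simp add: nonneg_mat_smult)
  have W: "rrho (four_block_mat T U (1\<^sub>m n) (0\<^sub>m n n)) < 1"
    using scaled_iff[OF T U nT nU, of 1] r by simp
  moreover have "rrho (four_block_mat T' U' (1\<^sub>m n) (0\<^sub>m n n)) \<le> rrho (four_block_mat T U (1\<^sub>m n) (0\<^sub>m n n))"
  proof (rule rrho_le_if_scaled_less_1[of _ "n + n", OF _ _ _ W])
    fix c :: real assume c: "1 \<le> c" and "rrho (c \<cdot>\<^sub>m four_block_mat T U (1\<^sub>m n) (0\<^sub>m n n)) < 1"
    then have "rrho (c \<cdot>\<^sub>m T + c \<cdot>\<^sub>m (c \<cdot>\<^sub>m U)) < 1" using scaled_iff[OF T U nT nU] by simp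
    then have "rrho (c \<cdot>\<^sub>m T' + c \<cdot>\<^sub>m (c \<cdot>\<^sub>m U')) < 1"
      using rrho_less_1_mono[OF _ _ n _ scaled_block_sum_le[OF T U T' U' c TT' sum]] T U T' U' nT' nU' c
      by (simp add: nonneg_mat_add[of _ n n] nonneg_mat_smult)
    then show "rrho (c \<cdot>\<^sub>m four_block_mat T' U' (1\<^sub>m n) (0\<^sub>m n n)) < 1"
      using scaled_iff[OF T' U' nT' nU'] c by simp
  qed (use T T' n in auto)
  ultimately show ?thesis by blast
qed

lemma double_splitting_iteration_identities:
  fixes A P1 R1 S1 P2 R2 S2 Q1 Q2 :: "real mat"
  assumes c: "A \<in> carrier_mat n n" "P1 \<in> carrier_mat n n" "R1 \<in> carrier_mat n n"
      "S1 \<in> carrier_mat n n" "P2 \<in> carrier_mat n n" "R2 \<in> carrier_mat n n"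
      "S2 \<in> carrier_mat n n" "Q1 \<in> carrier_mat n n" "Q2 \<in> carrier_mat n n"
    and A1: "A = P1 - R1 + S1" and A2: "A = P2 - R2 + S2"
    and Q1: "Q1 * P1 = 1\<^sub>m n" and Q2: "Q2 * P2 = 1\<^sub>m n"
  shows "Q2 * ((1\<^sub>m n - S2 * Q1) * A) = 1\<^sub>m n - ((Q2 * R2 - Q2 * S2 * Q1 * R1) + Q2 * S2 * Q1 * S1)"
    and "Q2 * ((1\<^sub>m n + R2 * Q1) * A) = 1\<^sub>m n - ((Q2 * R2 * Q1 * R1 - Q2 * S2) + - (Q2 * R2 * Q1 * S1))"
    and "Q2 * (R2 - S2 * Q1 * R1) = Q2 * R2 - Q2 * S2 * Q1 * R1"
    and "Q2 * (R2 * Q1 * R1 - S2) = Q2 * R2 * Q1 * R1 - Q2 * S2"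
proof -
  note distrib = mult_minus_distrib_mat[of _ n n _ n] minus_mult_distrib_mat[of _ n n _ _ n]
     add_mult_distrib_mat[of _ n n _ _ n] mult_add_distrib_mat[of _ n n _ n]
  have assoc4: "X * Y * Q1 * Z = X * (Y * (Q1 * Z))"
    if "X \<in> carrier_mat n n" "Y \<in> carrier_mat n n" "Z \<in> carrier_mat n n" for X Y Z
    using that c(8) by (simp add: assoc_mult_mat[of _ n n _ n _ n])
  have QA2: "Q2 * A = 1\<^sub>m n - Q2 * R2 + Q2 * S2" unfolding A2 using c Q2 by (simp add: distrib)
  have QA1: "Q1 * A = 1\<^sub>m n - Q1 * R1 + Q1 * S1" unfolding A1 using c Q1 by (simp add: distrib)
  have "Q2 * ((1\<^sub>m n - S2 * Q1) * A) = Q2 * A - Q2 * (S2 * (Q1 * A))" using c by (simp add: distrib)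
  also have "\<dots> = 1\<^sub>m n - ((Q2 * R2 - Q2 * S2 * Q1 * R1) + Q2 * S2 * Q1 * S1)"
    unfolding QA1 QA2 assoc4[OF c(9,7,3)] assoc4[OF c(9,7,4)] using c by (intro eq_matI) (auto simp: distrib)
  finally show "Q2 * ((1\<^sub>m n - S2 * Q1) * A) = 1\<^sub>m n - ((Q2 * R2 - Q2 * S2 * Q1 * R1) + Q2 * S2 * Q1 * S1)" .
  have "Q2 * ((1\<^sub>m n + R2 * Q1) * A) = Q2 * A + Q2 * (R2 * (Q1 * A))" using c by (simp add: distrib)
  also have "\<dots> = 1\<^sub>m n - ((Q2 * R2 * Q1 * R1 - Q2 * S2) + - (Q2 * R2 * Q1 * S1))"
    unfolding QA1 QA2 assoc4[OF c(9,6,3)] assoc4[OF c(9,6,4)] using c by (intro eq_matI) (auto simp: distrib)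
  finally show "Q2 * ((1\<^sub>m n + R2 * Q1) * A) = 1\<^sub>m n - ((Q2 * R2 * Q1 * R1 - Q2 * S2) + - (Q2 * R2 * Q1 * S1))" .
  show "Q2 * (R2 - S2 * Q1 * R1) = Q2 * R2 - Q2 * S2 * Q1 * R1"
    unfolding assoc4[OF c(9,7,3)] using c by (simp add: distrib)
  show "Q2 * (R2 * Q1 * R1 - S2) = Q2 * R2 * Q1 * R1 - Q2 * S2"
    unfolding assoc4[OF c(9,6,3)] using c by (simp add: distrib)
qed

lemma double_splitting_iteration_blocks_nonneg:
  fixes A P1 R1 S1 P2 R2 S2 :: "real mat"
  assumes c: "P1 \<in> carrier_mat n n" "R1 \<in> carrier_mat n n" "S1 \<in> carrier_mat n n"
      "P2 \<in> carrier_mat n n" "R2 \<in> carrier_mat n n" "S2 \<in> carrier_mat n n"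
    and spl1: "double_weak_regular_splitting A P1 R1 S1" and spl2: "double_regular_splitting A P2 R2 S2"
  shows "nonneg_mat (minv P2 * R2 - minv P2 * S2 * minv P1 * R1)"
    and "nonneg_mat (minv P2 * S2 * minv P1 * S1)"
    and "nonneg_mat (minv P2 * R2 * minv P1 * R1 - minv P2 * S2)"
    and "nonneg_mat (- (minv P2 * R2 * minv P1 * S1))"
proof -
  from spl1 spl2 c have "det P1 \<noteq> 0" "det P2 \<noteq> 0"
    unfolding double_weak_regular_splitting_def double_regular_splitting_def
    by (auto simp: invertible_mat_det_neq_0)
  then have Q1: "minv P1 \<in> carrier_mat n n" and Q2: "minv P2 \<in> carrier_mat n n"
    using minv_inverse(1) c by blast+
  from spl1 spl2 c Q1 Q2 have nQ2: "nonneg_mat (minv P2)" and nR2: "nonneg_mat R2"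
    and nS2: "nonneg_mat (- S2)" and nQ1R1: "nonneg_mat (minv P1 * R1)"
    and nQ1S1: "nonneg_mat (- (minv P1 * S1))"
    unfolding double_weak_regular_splitting_def double_regular_splitting_def
    by (auto simp: zero_le_mat_iff_nonneg_mat le_zero_mat_iff_nonneg_mat_uminus)
  have assoc: "X * Y * minv P1 * Z = (X * Y) * (minv P1 * Z)"
    if "X \<in> carrier_mat n n" "Y \<in> carrier_mat n n" "Z \<in> carrier_mat n n" for X Y Z
    using that Q1 by (simp add: assoc_mult_mat[of _ n n _ n _ n])
  have QR2: "nonneg_mat (minv P2 * R2)" using nonneg_mat_mult[OF _ nQ2 nR2] c Q2 by simp
  have QS2: "nonneg_mat (- (minv P2 * S2))" using nonneg_mat_uminus_mult_right[OF _ nQ2 nS2] c Q2 by simp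
  show "nonneg_mat (minv P2 * R2 - minv P2 * S2 * minv P1 * R1)"
    unfolding assoc[OF Q2 c(6,2)] using c Q1 Q2 QR2 nonneg_mat_uminus_mult_left[OF _ QS2 nQ1R1]
    by (intro nonneg_mat_diff[of _ n n]) auto
  show "nonneg_mat (minv P2 * S2 * minv P1 * S1)"
    unfolding assoc[OF Q2 c(6,3)] using c Q1 Q2 by (intro nonneg_mat_uminus_mult_uminus QS2 nQ1S1) auto
  show "nonneg_mat (minv P2 * R2 * minv P1 * R1 - minv P2 * S2)"
    unfolding assoc[OF Q2 c(5,2)] using c Q1 Q2 QS2
    by (intro nonneg_mat_diff[of _ n n] nonneg_mat_mult QR2 nQ1R1) auto
  show "nonneg_mat (- (minv P2 * R2 * minv P1 * S1))"
    unfolding assoc[OF Q2 c(5,3)] using c Q1 Q2 by (intro nonneg_mat_uminus_mult_right QR2 nQ1S1) auto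
qed

theorem corollary3p20:
  fixes n :: nat and A P1 R1 S1 P2 R2 S2 :: "real mat"
  assumes n: "0 < n"
    and carr: "A \<in> carrier_mat n n" "P1 \<in> carrier_mat n n" "R1 \<in> carrier_mat n n"
      "S1 \<in> carrier_mat n n" "P2 \<in> carrier_mat n n" "R2 \<in> carrier_mat n n"
      "S2 \<in> carrier_mat n n"
    and mono: "monotone_mat A"
    and spl1: "double_weak_regular_splitting A P1 R1 S1"
    and spl2: "double_regular_splitting A P2 R2 S2"
    and sp1: "1 \<notin> rspec (S2 * minv P1)"
    and sp2: "-1 \<notin> rspec (R2 * minv P1)"
    and Ahat: "0\<^sub>m n n \<le> minv ((1\<^sub>m n - S2 * minv P1) * A)"
    and Acal: "0\<^sub>m n n \<le> minv ((1\<^sub>m n + R2 * minv P1) * A)"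
    and cmpR: "minv P2 * (R2 - S2 * minv P1 * R1) \<le> minv P2 * (R2 * minv P1 * R1 - S2)"
    and cmpA: "minv P2 * ((1\<^sub>m n - S2 * minv P1) * A) \<le> minv P2 * ((1\<^sub>m n + R2 * minv P1) * A)"
  shows "rrho (four_block_mat (minv P2 * R2 * minv P1 * R1 - minv P2 * S2)
                              (- (minv P2 * R2 * minv P1 * S1))
                              (1\<^sub>m n) (0\<^sub>m n n))
           \<le> rrho (four_block_mat (minv P2 * R2 - minv P2 * S2 * minv P1 * R1)
                                 (minv P2 * S2 * minv P1 * S1)
                                 (1\<^sub>m n) (0\<^sub>m n n))
       \<and> rrho (four_block_mat (minv P2 * R2 - minv P2 * S2 * minv P1 * R1)
                              (minv P2 * S2 * minv P1 * S1)
                              (1\<^sub>m n) (0\<^sub>m n n)) < 1"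
proof -
  from spl1 spl2 carr have A1: "A = P1 - R1 + S1" and A2: "A = P2 - R2 + S2"
    and dP1: "det P1 \<noteq> 0" and dP2: "det P2 \<noteq> 0" and nQ2: "0\<^sub>m n n \<le> minv P2"
    unfolding double_weak_regular_splitting_def double_regular_splitting_def
    by (auto simp: invertible_mat_det_neq_0)
  note Q1 = minv_inverse[OF carr(2) dP1] and Q2 = minv_inverse[OF carr(5) dP2]
  note ids = double_splitting_iteration_identities[OF carr Q1(1) Q2(1) A1 A2 Q1(3) Q2(3)]
  note blocks = double_splitting_iteration_blocks_nonneg[OF carr(2-7) spl1 spl2]
  let ?Ah = "(1\<^sub>m n - S2 * minv P1) * A"
  have Ah: "?Ah \<in> carrier_mat n n" using carr Q1 by auto
  have dAh: "det ?Ah \<noteq> 0"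
    using det_mult[of "1\<^sub>m n - S2 * minv P1" n] det_one_minus_neq_0[OF _ sp1]
      invertible_mat_det_neq_0[OF carr(1)] mono carr Q1 unfolding monotone_mat_def by auto
  have "nonneg_mat (minv P2)" "nonneg_mat (minv ?Ah)"
    using nQ2 Ahat Q2(1) minv_inverse(1)[OF Ah dAh] by (simp_all add: zero_le_mat_iff_nonneg_mat)
  moreover have "nonneg_mat ((minv P2 * R2 - minv P2 * S2 * minv P1 * R1) + minv P2 * S2 * minv P1 * S1)"
    by (rule nonneg_mat_add[OF _ _ blocks(1,2), of n n]) (use carr Q1 Q2 in auto)
  ultimately have "rrho ((minv P2 * R2 - minv P2 * S2 * minv P1 * R1) + minv P2 * S2 * minv P1 * S1) < 1"
    by (intro rrho_less_1_if_weak_regular_splitting[OF Ah carr(5) _ n dP2 dAh _ _ _ ids(1)])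
      (use carr Q1 Q2 in auto)
  moreover have "minv P2 * R2 - minv P2 * S2 * minv P1 * R1 \<le> minv P2 * R2 * minv P1 * R1 - minv P2 * S2"
    using cmpR unfolding ids(3,4) .
  moreover have "(minv P2 * R2 * minv P1 * R1 - minv P2 * S2) + - (minv P2 * R2 * minv P1 * S1)
      \<le> (minv P2 * R2 - minv P2 * S2 * minv P1 * R1) + minv P2 * S2 * minv P1 * S1"
    using cmpA unfolding ids(1,2) by (rule le_diff_mat_cancel_left[rotated 3]) (use carr Q1 Q2 in auto)
  ultimately show ?thesis
    by (intro rrho_block_companion_le[OF _ _ _ _ n blocks(1,2,3,4)]) (use carr Q1 Q2 in auto)
qed

end
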